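(* Let $G$ be a finitely generated left-orderable group and $H$ a finite index subgroup of $G$ such that $H$ is Hucha with respect to a family $\mathcal{H}$ of subgroups of $H$. Then $G$ is Hucha with respect to $\mathcal{H}$.
   Context: A positive cone of $G$ is a subsemigroup $P$ with $G=P\sqcup P^{-1}\sqcup\{1\}$; $G$ is left-orderable if it has one. With a finite symmetric generating set $X$ and word metric $d_X$, an $r$-path is a sequence $g_0,\dots,g_n$ with $d_X(g_i,g_{i+1})\le r$. A set $S$ $r$-disconnects subsets $H_1,H_2$ if every $r$-path starting in $H_1$ and ending in $H_2$ meets $S$; $S$ $r$-disconnects $P$ if there are $u,v\in P$ with $S$ $r$-disconnecting $\{u\},\{v\}$. A negative swamp of width $r$ for a subgroup $K$ (with respect to a positive cone $P$) is $S\subseteq P^{-1}$ that $r$-disconnects $P$ and $r$-disconnects $g_1K$ and $g_2K$ for some $g_1,g_2\in G$. A finitely generated left-orderable group $G$ is Hucha with respect to a family $\mathcal{H}$ of subgroups if for some finite generating set $X$ (equivalently, any), for every positive cone $P$, every $K\in\mathcal{H}$ and every $r>0$ there is a negative swamp of width $r$ for $K$ in $\Gamma(G,X)$. *)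

theory Defs
  imports Complex_Main "HOL-Algebra.Algebra"
begin

definition fin_gen :: "('a, 'b) monoid_scheme \<Rightarrow> bool" where
  "fin_gen G \<longleftrightarrow> (\<exists>Y. finite Y \<and> Y \<subseteq> carrier G \<and> generate G Y = carrier G)"

definition sym_gen_set :: "('a, 'b) monoid_scheme \<Rightarrow> 'a set \<Rightarrow> bool" where
  "sym_gen_set G Y \<longleftrightarrow> finite Y \<and> Y \<subseteq> carrier G \<and> (\<forall>x\<in>Y. inv\<^bsub>G\<^esub> x \<in> Y)
     \<and> generate G Y = carrier G"

definition positive_cone :: "('a, 'b) monoid_scheme \<Rightarrow> 'a set \<Rightarrow> bool" where
  "positive_cone G P \<longleftrightarrow> P \<subseteq> carrier G
     \<and> (\<forall>x\<in>P. \<forall>y\<in>P. x \<otimes>\<^bsub>G\<^esub> y \<in> P)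
     \<and> carrier G = P \<union> (\<lambda>x. inv\<^bsub>G\<^esub> x) ` P \<union> {\<one>\<^bsub>G\<^esub>}
     \<and> P \<inter> (\<lambda>x. inv\<^bsub>G\<^esub> x) ` P = {}
     \<and> \<one>\<^bsub>G\<^esub> \<notin> P \<and> \<one>\<^bsub>G\<^esub> \<notin> (\<lambda>x. inv\<^bsub>G\<^esub> x) ` P"

definition left_orderable :: "('a, 'b) monoid_scheme \<Rightarrow> bool" where
  "left_orderable G \<longleftrightarrow> (\<exists>P. positive_cone G P)"

text \<open>Word metric d_X(g,h) = length of a shortest word in Y representing g^-1 h
  (the path metric of the Cayley graph with edges g -- g x).\<close>
definition word_dist :: "('a, 'b) monoid_scheme \<Rightarrow> 'a set \<Rightarrow> 'a \<Rightarrow> 'a \<Rightarrow> nat" where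
  "word_dist G Y g h = (LEAST n. \<exists>xs. length xs = n \<and> set xs \<subseteq> Y
      \<and> foldr (\<lambda>x y. x \<otimes>\<^bsub>G\<^esub> y) xs \<one>\<^bsub>G\<^esub> = inv\<^bsub>G\<^esub> g \<otimes>\<^bsub>G\<^esub> h)"

definition r_path :: "('a, 'b) monoid_scheme \<Rightarrow> 'a set \<Rightarrow> real \<Rightarrow> 'a list \<Rightarrow> bool" where
  "r_path G Y r ps \<longleftrightarrow> ps \<noteq> [] \<and> set ps \<subseteq> carrier G
     \<and> (\<forall>i. Suc i < length ps \<longrightarrow> real (word_dist G Y (ps ! i) (ps ! Suc i)) \<le> r)"

definition r_disconnects :: "('a, 'b) monoid_scheme \<Rightarrow> 'a set \<Rightarrow> real \<Rightarrow> 'a set \<Rightarrow> 'a set \<Rightarrow> 'a set \<Rightarrow> bool" where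
  "r_disconnects G Y r S A B \<longleftrightarrow>
     (\<forall>ps. r_path G Y r ps \<and> hd ps \<in> A \<and> last ps \<in> B \<longrightarrow> set ps \<inter> S \<noteq> {})"

definition r_disconnects_set :: "('a, 'b) monoid_scheme \<Rightarrow> 'a set \<Rightarrow> real \<Rightarrow> 'a set \<Rightarrow> 'a set \<Rightarrow> bool" where
  "r_disconnects_set G Y r S P \<longleftrightarrow> (\<exists>u\<in>P. \<exists>v\<in>P. r_disconnects G Y r S {u} {v})"

definition negative_swamp :: "('a, 'b) monoid_scheme \<Rightarrow> 'a set \<Rightarrow> 'a set \<Rightarrow> 'a set \<Rightarrow> real \<Rightarrow> 'a set \<Rightarrow> bool" where
  "negative_swamp G Y P K r S \<longleftrightarrow>
     S \<subseteq> (\<lambda>x. inv\<^bsub>G\<^esub> x) ` P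
     \<and> r_disconnects_set G Y r S P
     \<and> (\<exists>g1\<in>carrier G. \<exists>g2\<in>carrier G.
          r_disconnects G Y r S (g1 <#\<^bsub>G\<^esub> K) (g2 <#\<^bsub>G\<^esub> K))"

definition Hucha :: "('a, 'b) monoid_scheme \<Rightarrow> 'a set set \<Rightarrow> bool" where
  "Hucha G \<H> \<longleftrightarrow> group G \<and> fin_gen G \<and> left_orderable G \<and>
     (\<exists>Y. sym_gen_set G Y \<and>
        (\<forall>P. positive_cone G P \<longrightarrow> (\<forall>K\<in>\<H>. \<forall>r::real. r > 0 \<longrightarrow>
            (\<exists>S. negative_swamp G Y P K r S))))"

end

theory Submission
  imports Defs
begin

text \<open>
  P \<inter> H is a positive cone of H. In every right coset H x \<noteq> H choose a negative
  representative t: one exists because, for positive x, finiteness of the index puts some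
  power x^n with n \<ge> 2 into H, and then x^-n x = x^-(n-1) is negative. With t = 1 on H itself,
  the retraction g \<mapsto> g t\<inverse> onto H moves points by a bounded amount, so it maps r-paths
  of G to r'-paths of H for some r'. Hence the preimage of a negative swamp of width r' in H
  disconnects in G whatever that swamp disconnects in H, and it is negative because
  g = (g t\<inverse>) t with t negative or 1.
\<close>

section \<open>Words and the word metric\<close>

definition word_prod :: "('a, 'b) monoid_scheme \<Rightarrow> 'a list \<Rightarrow> 'a" where
  "word_prod G xs = foldr (\<lambda>x y. x \<otimes>\<^bsub>G\<^esub> y) xs \<one>\<^bsub>G\<^esub>"

lemma word_dist_eq_Least:
  "word_dist G Y g h = Least (\<lambda>n. \<exists>xs. length xs = n \<and> set xs \<subseteq> Y \<and> word_prod G xs = inv\<^bsub>G\<^esub> g \<otimes>\<^bsub>G\<^esub> h)"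
  unfolding word_dist_def word_prod_def ..

lemma (in monoid) word_prod_closed: "set xs \<subseteq> carrier G \<Longrightarrow> word_prod G xs \<in> carrier G"
  unfolding word_prod_def by (induction xs) auto

lemma (in monoid) word_prod_append:
  "set xs \<subseteq> carrier G \<Longrightarrow> set ys \<subseteq> carrier G \<Longrightarrow> word_prod G (xs @ ys) = word_prod G xs \<otimes> word_prod G ys"
proof (induction xs)
  case Nil
  then show ?case using word_prod_closed by (simp add: word_prod_def)
next
  case (Cons x xs)
  then show ?case using word_prod_closed by (simp add: word_prod_def m_assoc)
qed

lemma (in group) word_exists_if_generate:
  assumes "Y \<subseteq> carrier G" "\<forall>x\<in>Y. inv x \<in> Y" "e \<in> generate G Y"
  shows "\<exists>xs. set xs \<subseteq> Y \<and> word_prod G xs = e"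
  using assms(3)
proof (induction rule: generate.induct)
  case one
  show ?case by (rule exI[of _ "[]"]) (simp add: word_prod_def)
next
  case (incl x)
  then show ?case using assms(1) by (intro exI[of _ "[x]"]) (auto simp: word_prod_def)
next
  case (inv x)
  then show ?case using assms by (intro exI[of _ "[inv x]"]) (auto simp: word_prod_def)
next
  case (eng a b)
  then obtain xs ys where "set xs \<subseteq> Y" "word_prod G xs = a" "set ys \<subseteq> Y" "word_prod G ys = b"
    by blast
  then show ?case using assms(1) by (intro exI[of _ "xs @ ys"]) (auto simp: word_prod_append)
qed

lemma (in group) word_dist_witness:
  assumes "sym_gen_set G Y" "g \<in> carrier G" "h \<in> carrier G"
  shows "\<exists>xs. length xs = word_dist G Y g h \<and> set xs \<subseteq> Y \<and> word_prod G xs = inv g \<otimes> h"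
proof -
  have Y: "Y \<subseteq> carrier G" "\<forall>x\<in>Y. inv x \<in> Y" "generate G Y = carrier G"
    using assms(1) unfolding sym_gen_set_def by auto
  then obtain xs where "set xs \<subseteq> Y" "word_prod G xs = inv g \<otimes> h"
    using word_exists_if_generate[OF Y(1,2), of "inv g \<otimes> h"] assms(2,3) by auto
  then have "\<exists>n xs. length xs = n \<and> set xs \<subseteq> Y \<and> word_prod G xs = inv g \<otimes> h"
    by blast
  then show ?thesis unfolding word_dist_eq_Least by (rule LeastI_ex)
qed

lemma (in group) word_dist_eq_from_one:
  "g \<in> carrier G \<Longrightarrow> h \<in> carrier G \<Longrightarrow> word_dist G Y g h = word_dist G Y \<one> (inv g \<otimes> h)"
  by (simp add: word_dist_def)

lemma (in group) word_dist_subgroup: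
  "subgroup H G \<Longrightarrow> g \<in> H \<Longrightarrow> word_dist (G\<lparr>carrier := H\<rparr>) Y g h = word_dist G Y g h"
  by (simp add: word_dist_def m_inv_consistent)

lemma (in group) sym_gen_set_if_fin_gen:
  assumes "fin_gen G"
  obtains Y where "sym_gen_set G Y"
proof -
  obtain Y0 where Y0: "finite Y0" "Y0 \<subseteq> carrier G" "generate G Y0 = carrier G"
    using assms unfolding fin_gen_def by blast
  have "generate G Y0 \<subseteq> generate G (Y0 \<union> (\<lambda>y. inv y) ` Y0)"
    by (rule mono_generate) blast
  moreover have "generate G (Y0 \<union> (\<lambda>y. inv y) ` Y0) \<subseteq> carrier G"
    using Y0(2) by (intro generate_incl) auto
  moreover have "inv x \<in> Y0 \<union> (\<lambda>y. inv y) ` Y0" if "x \<in> Y0 \<union> (\<lambda>y. inv y) ` Y0" for x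
    using that Y0(2) by (auto simp: subsetD)
  ultimately have "sym_gen_set G (Y0 \<union> (\<lambda>y. inv y) ` Y0)"
    using Y0 unfolding sym_gen_set_def by auto
  then show ?thesis by (rule that)
qed

section \<open>Positive cones\<close>

lemma positive_cone_subset: "positive_cone G P \<Longrightarrow> P \<subseteq> carrier G"
  unfolding positive_cone_def by blast

lemma positive_cone_mult: "positive_cone G P \<Longrightarrow> x \<in> P \<Longrightarrow> y \<in> P \<Longrightarrow> x \<otimes>\<^bsub>G\<^esub> y \<in> P"
  unfolding positive_cone_def by blast

lemma positive_cone_cases:
  assumes "positive_cone G P" "x \<in> carrier G"
  obtains "x \<in> P" | "x \<in> (\<lambda>p. inv\<^bsub>G\<^esub> p) ` P" | "x = \<one>\<^bsub>G\<^esub>"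
  using assms unfolding positive_cone_def by blast

lemma (in group) positive_cone_pow:
  fixes n :: nat
  assumes "positive_cone G P" "x \<in> P"
  shows "0 < n \<Longrightarrow> x [^] n \<in> P"
proof (induction n)
  case (Suc n)
  have x: "x \<in> carrier G" using assms positive_cone_subset by blast
  show ?case
  proof (cases "n = 0")
    case False
    then show ?thesis using Suc x assms by (simp add: positive_cone_mult)
  qed (use x assms in simp)
qed simp

lemma (in group) negative_cone_mult:
  assumes "positive_cone G P" "x \<in> (\<lambda>p. inv p) ` P" "y \<in> (\<lambda>p. inv p) ` P"
  shows "x \<otimes> y \<in> (\<lambda>p. inv p) ` P"
proof -
  obtain p q where pq: "p \<in> P" "q \<in> P" "x = inv p" "y = inv q"
    using assms(2,3) by blast
  then have "x \<otimes> y = inv (q \<otimes> p)"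
    using positive_cone_subset[OF assms(1)] by (simp add: inv_mult_group subsetD)
  then show ?thesis using pq positive_cone_mult[OF assms(1)] by blast
qed

lemma (in group) positive_cone_subgroup:
  assumes P: "positive_cone G P" and H: "subgroup H G"
  shows "positive_cone (G\<lparr>carrier := H\<rparr>) (P \<inter> H)"
proof -
  have inv_eq: "(\<lambda>p. inv\<^bsub>G\<lparr>carrier := H\<rparr>\<^esub> p) ` (P \<inter> H) = (\<lambda>p. inv p) ` (P \<inter> H)"
    using m_inv_consistent[OF H] by simp
  have "x \<in> (P \<inter> H) \<union> (\<lambda>p. inv p) ` (P \<inter> H) \<union> {\<one>}" if x: "x \<in> H" for x
  proof -
    have "x \<in> carrier G" using x subgroup.subset[OF H] by blast
    with P show ?thesis
    proof (cases rule: positive_cone_cases)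
      case 2
      then obtain p where p: "p \<in> P" "x = inv p" by blast
      then have "p = inv x" using positive_cone_subset[OF P] by (simp add: subsetD)
      then have "p \<in> H" using x H by (simp add: subgroup.m_inv_closed)
      then show ?thesis using p by blast
    qed (use x in auto)
  qed
  moreover have "(\<lambda>p. inv p) ` (P \<inter> H) \<subseteq> H" "\<one> \<in> H"
    using H by (auto simp: subgroup.m_inv_closed subgroup.one_closed)
  ultimately have "H = (P \<inter> H) \<union> (\<lambda>p. inv p) ` (P \<inter> H) \<union> {\<one>}"
    by blast
  then show ?thesis
    using P H unfolding positive_cone_def inv_eq by (auto simp: subgroup.m_closed)
qed

section \<open>Cosets of a finite index subgroup\<close>

lemma (in group) pow_mem_finite_index_subgroup:
  assumes H: "subgroup H G" and fin: "finite (rcosets H)" and x: "x \<in> carrier G"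
  obtains n :: nat where "0 < n" "x [^] n \<in> H"
proof -
  have "range (\<lambda>k::nat. H #> x [^] k) \<subseteq> rcosets H"
    using x subgroup.subset[OF H] by (auto intro: rcosetsI)
  then have "finite (range (\<lambda>k::nat. H #> x [^] k))"
    using fin by (rule finite_subset)
  then have "\<not> inj (\<lambda>k::nat. H #> x [^] k)"
    using finite_imageD infinite_UNIV_nat by blast
  then obtain a b :: nat where "a \<noteq> b" "H #> x [^] a = H #> x [^] b"
    unfolding inj_def by blast
  then obtain a b :: nat where ab: "a < b" "H #> x [^] a = H #> x [^] b"
    by (metis linorder_neq_iff)
  have "x [^] b \<in> H #> x [^] a"
    using ab(2) x H by (simp add: rcos_self)
  then have "x [^] b \<otimes> inv (x [^] a) \<in> H"
    using x by (simp add: subgroup.rcos_module_imp[OF H is_group])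
  moreover have "x [^] b = x [^] (b - a) \<otimes> x [^] a"
    using ab(1) x by (simp add: nat_pow_mult)
  ultimately have "x [^] (b - a) \<in> H"
    using x by (simp add: m_assoc)
  with ab(1) show ?thesis by (intro that) simp_all
qed

lemma (in group) rcoset_meets_negative_cone:
  assumes P: "positive_cone G P" and H: "subgroup H G" and fin: "finite (rcosets H)"
    and x: "x \<in> carrier G" "x \<notin> H"
  shows "\<exists>t \<in> H #> x. t \<in> (\<lambda>p. inv p) ` P"
  using P x(1)
proof (cases rule: positive_cone_cases)
  case 1
  obtain n :: nat where n: "0 < n" "x [^] n \<in> H"
    using pow_mem_finite_index_subgroup[OF H fin x(1)] .
  then obtain k where k: "n = Suc k"
    using gr0_conv_Suc by blast
  have "k \<noteq> 0"
  proof
    assume "k = 0"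
    then show False using n(2) k x by simp
  qed
  have "x [^] n = x \<otimes> x [^] k"
    using k x by (simp only: nat_pow_Suc2)
  then have "inv (x [^] n) \<otimes> x = inv (x [^] k)"
    using x by (simp add: inv_mult_group m_assoc)
  moreover have "inv (x [^] n) \<otimes> x \<in> H #> x"
    using n(2) H x by (intro rcosI) (auto simp: subgroup.m_inv_closed subgroup.subset)
  moreover have "x [^] k \<in> P"
    using positive_cone_pow[OF P 1] \<open>k \<noteq> 0\<close> by simp
  ultimately show ?thesis by auto
next
  case 3
  then show ?thesis using x H by (simp add: subgroup.one_closed)
qed (use x H rcos_self in blast)

lemma (in group) negative_transversal:
  assumes P: "positive_cone G P" and H: "subgroup H G" and fin: "finite (rcosets H)"
  obtains t where "t H = \<one>" "\<And>C. C \<in> rcosets H \<Longrightarrow> t C \<in> C"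
    "\<And>C. C \<in> rcosets H \<Longrightarrow> C \<noteq> H \<Longrightarrow> t C \<in> (\<lambda>p. inv p) ` P"
proof -
  have "\<forall>C \<in> rcosets H. \<exists>t. t \<in> C \<and> (C \<noteq> H \<longrightarrow> t \<in> (\<lambda>p. inv p) ` P)"
  proof
    fix C assume "C \<in> rcosets H"
    then obtain x where x: "x \<in> carrier G" "C = H #> x"
      unfolding RCOSETS_def by blast
    show "\<exists>t. t \<in> C \<and> (C \<noteq> H \<longrightarrow> t \<in> (\<lambda>p. inv p) ` P)"
    proof (cases "x \<in> H")
      case True
      then have "C = H" using x(2) subgroup.rcos_const[OF H is_group] by blast
      then show ?thesis using subgroup.one_closed[OF H] by blast
    next
      case False
      then show ?thesis using rcoset_meets_negative_cone[OF P H fin x(1)] x(2) by blast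
    qed
  qed
  then have "\<exists>\<tau>. \<forall>C \<in> rcosets H. \<tau> C \<in> C \<and> (C \<noteq> H \<longrightarrow> \<tau> C \<in> (\<lambda>p. inv p) ` P)"
    by (rule bchoice)
  then obtain \<tau> where \<tau>: "\<forall>C \<in> rcosets H. \<tau> C \<in> C \<and> (C \<noteq> H \<longrightarrow> \<tau> C \<in> (\<lambda>p. inv p) ` P)"
    by blast
  define t where "t C = (if C = H then \<one> else \<tau> C)" for C
  have "t C \<in> C" if "C \<in> rcosets H" for C
    using \<tau> that subgroup.one_closed[OF H] unfolding t_def by simp
  moreover have "t C \<in> (\<lambda>p. inv p) ` P" if "C \<in> rcosets H" "C \<noteq> H" for C
    using \<tau> that unfolding t_def by simp
  ultimately show ?thesis
    using that[of t] unfolding t_def by simp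
qed

lemma (in group) negative_retraction:
  assumes P: "positive_cone G P" and H: "subgroup H G" and fin: "finite (rcosets H)"
  obtains f where "f \<in> carrier G \<rightarrow> H" "\<And>h. h \<in> H \<Longrightarrow> f h = h"
    "\<And>g. g \<in> carrier G \<Longrightarrow> f g \<in> (\<lambda>p. inv p) ` P \<Longrightarrow> g \<in> (\<lambda>p. inv p) ` P"
    "finite ((\<lambda>g. inv (f g) \<otimes> g) ` carrier G)"
proof -
  obtain t where t_H: "t H = \<one>" and t_mem: "\<And>C. C \<in> rcosets H \<Longrightarrow> t C \<in> C"
    and t_neg: "\<And>C. C \<in> rcosets H \<Longrightarrow> C \<noteq> H \<Longrightarrow> t C \<in> (\<lambda>p. inv p) ` P"
    using negative_transversal[OF P H fin] by blast
  have coset: "H #> g \<in> rcosets H" if "g \<in> carrier G" for g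
    using rcosetsI[OF subgroup.subset[OF H] that] .
  have t_carrier: "t (H #> g) \<in> carrier G" if "g \<in> carrier G" for g
    using t_mem[OF coset[OF that]] r_coset_subset_G[OF subgroup.subset[OF H] that] by blast
  define f where "f g = g \<otimes> inv (t (H #> g))" for g
  have f_carrier: "f g \<in> carrier G" if "g \<in> carrier G" for g
    unfolding f_def using that t_carrier[OF that] by simp
  have f_times_t: "f g \<otimes> t (H #> g) = g" if "g \<in> carrier G" for g
    unfolding f_def using that t_carrier[OF that] by (simp add: m_assoc)
  show ?thesis
  proof
    show "f \<in> carrier G \<rightarrow> H"
    proof
      fix g assume g: "g \<in> carrier G"
      have "inv (t (H #> g) \<otimes> inv g) \<in> H"
        using subgroup.rcos_module_imp[OF H is_group g t_mem[OF coset[OF g]]] H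
        by (simp add: subgroup.m_inv_closed)
      then show "f g \<in> H"
        unfolding f_def using g t_carrier[OF g] by (simp add: inv_mult_group)
    qed
  next
    fix h assume "h \<in> H"
    then show "f h = h"
      using H t_H unfolding f_def
      by (simp add: subgroup.rcos_const[OF H is_group] subgroup.mem_carrier)
  next
    fix g assume g: "g \<in> carrier G" and neg: "f g \<in> (\<lambda>p. inv p) ` P"
    show "g \<in> (\<lambda>p. inv p) ` P"
    proof (cases "H #> g = H")
      case True
      then show ?thesis using neg f_times_t[OF g] f_carrier[OF g] t_H by simp
    next
      case False
      from negative_cone_mult[OF P neg t_neg[OF coset[OF g] False]] show ?thesis
        using f_times_t[OF g] by simp
    qed
  next
    have "inv (f g) \<otimes> g = t (H #> g)" if "g \<in> carrier G" for g
      using f_times_t[OF that] f_carrier[OF that] t_carrier[OF that] that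
      by (simp add: inv_solve_left')
    then have "(\<lambda>g. inv (f g) \<otimes> g) ` carrier G \<subseteq> t ` (rcosets H)"
      using coset by auto
    then show "finite ((\<lambda>g. inv (f g) \<otimes> g) ` carrier G)"
      using finite_subset fin by blast
  qed
qed

section \<open>Maps between Cayley graphs\<close>

definition maps_steps ::
  "('a \<Rightarrow> 'c) \<Rightarrow> ('a, 'b) monoid_scheme \<Rightarrow> 'a set \<Rightarrow> real \<Rightarrow> ('c, 'd) monoid_scheme \<Rightarrow> 'c set \<Rightarrow> real \<Rightarrow> bool"
where
  "maps_steps f G Y r G' Z r' \<longleftrightarrow> f \<in> carrier G \<rightarrow> carrier G' \<and>
     (\<forall>g \<in> carrier G. \<forall>h \<in> carrier G.
        real (word_dist G Y g h) \<le> r \<longrightarrow> real (word_dist G' Z (f g) (f h)) \<le> r')"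

lemma r_path_map:
  assumes "maps_steps f G Y r G' Z r'" "r_path G Y r ps"
  shows "r_path G' Z r' (map f ps)"
  using assms unfolding maps_steps_def r_path_def by (auto simp: Pi_iff subsetD)

lemma r_disconnects_vimage:
  assumes f: "maps_steps f G Y r G' Z r'" and S': "r_disconnects G' Z r' S' A' B'"
    and "f ` A \<subseteq> A'" "f ` B \<subseteq> B'"
  shows "r_disconnects G Y r {g \<in> carrier G. f g \<in> S'} A B"
  unfolding r_disconnects_def
proof (intro allI impI)
  fix ps assume ps: "r_path G Y r ps \<and> hd ps \<in> A \<and> last ps \<in> B"
  then have "ps \<noteq> []" "set ps \<subseteq> carrier G"
    unfolding r_path_def by auto
  have "hd (map f ps) \<in> A'" "last (map f ps) \<in> B'"
    using ps assms(3,4) \<open>ps \<noteq> []\<close> by (auto simp: hd_map last_map)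
  then have "set (map f ps) \<inter> S' \<noteq> {}"
    using S' r_path_map[OF f] ps unfolding r_disconnects_def by blast
  then show "set ps \<inter> {g \<in> carrier G. f g \<in> S'} \<noteq> {}"
    using \<open>set ps \<subseteq> carrier G\<close> by auto
qed

lemma (in group) maps_steps_if_finite_displacement:
  assumes Y: "sym_gen_set G Y" and H: "subgroup H G" and f: "f \<in> carrier G \<rightarrow> H"
    and fin: "finite ((\<lambda>g. inv (f g) \<otimes> g) ` carrier G)"
  obtains r' where "r' > 0" "maps_steps f G Y r (G\<lparr>carrier := H\<rparr>) Z r'"
proof -
  define D where "D = (\<lambda>g. inv (f g) \<otimes> g) ` carrier G"
  define B where "B = word_prod G ` {xs. set xs \<subseteq> Y \<and> length xs \<le> nat \<lceil>r\<rceil>}"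
  define F where "F = (\<lambda>(a, w, b). a \<otimes> w \<otimes> inv b) ` (D \<times> B \<times> D)"
  define r' where "r' = real (Max ((\<lambda>e. word_dist G Z \<one> e) ` F)) + 1"
  have "finite B"
    using Y unfolding B_def sym_gen_set_def by (simp add: finite_lists_length_le)
  then have "finite F"
    using fin unfolding F_def D_def by simp
  have f_carrier: "f g \<in> carrier G" if "g \<in> carrier G" for g
    using f that subgroup.subset[OF H] by blast
  have "real (word_dist (G\<lparr>carrier := H\<rparr>) Z (f g) (f h)) \<le> r'"
    if g: "g \<in> carrier G" and h: "h \<in> carrier G" and d: "real (word_dist G Y g h) \<le> r" for g h
  proof -
    obtain xs where xs: "length xs = word_dist G Y g h" "set xs \<subseteq> Y" "word_prod G xs = inv g \<otimes> h"
      using word_dist_witness[OF Y g h] by blast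
    then have "inv g \<otimes> h \<in> B"
      using d unfolding B_def by (auto intro!: image_eqI[of _ _ xs]; linarith)
    moreover have "inv (f g) \<otimes> f h = (inv (f g) \<otimes> g) \<otimes> (inv g \<otimes> h) \<otimes> inv (inv (f h) \<otimes> h)"
    proof -
      have "g \<otimes> (inv g \<otimes> h) = h" "h \<otimes> (inv h \<otimes> f h) = f h"
        using g h f_carrier[OF h] by (simp_all add: m_assoc[symmetric])
      then show ?thesis
        using g h f_carrier[OF g] f_carrier[OF h] by (simp add: inv_mult_group m_assoc)
    qed
    ultimately have "inv (f g) \<otimes> f h \<in> F"
      unfolding F_def D_def using g h
      by (intro image_eqI[where x = "(inv (f g) \<otimes> g, inv g \<otimes> h, inv (f h) \<otimes> h)"]) auto
    then have "word_dist G Z \<one> (inv (f g) \<otimes> f h) \<le> Max ((\<lambda>e. word_dist G Z \<one> e) ` F)"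
      using \<open>finite F\<close> by simp
    moreover have "word_dist (G\<lparr>carrier := H\<rparr>) Z (f g) (f h) = word_dist G Z \<one> (inv (f g) \<otimes> f h)"
      unfolding word_dist_subgroup[OF H funcset_mem[OF f g]]
      by (rule word_dist_eq_from_one[OF f_carrier[OF g] f_carrier[OF h]])
    ultimately show ?thesis unfolding r'_def by linarith
  qed
  moreover have "f \<in> carrier G \<rightarrow> carrier (G\<lparr>carrier := H\<rparr>)"
    using f by simp
  ultimately have "maps_steps f G Y r (G\<lparr>carrier := H\<rparr>) Z r'"
    unfolding maps_steps_def by blast
  moreover have "r' > 0"
    unfolding r'_def by simp
  ultimately show ?thesis using that by blast
qed

lemma (in group) negative_swamp_vimage:
  assumes H: "subgroup H G" and K: "K \<subseteq> H"
    and f: "maps_steps f G Y r (G\<lparr>carrier := H\<rparr>) Z r'" and f_id: "\<And>h. h \<in> H \<Longrightarrow> f h = h"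
    and f_neg: "\<And>g. g \<in> carrier G \<Longrightarrow> f g \<in> (\<lambda>p. inv p) ` P \<Longrightarrow> g \<in> (\<lambda>p. inv p) ` P"
    and S': "negative_swamp (G\<lparr>carrier := H\<rparr>) Z (P \<inter> H) K r' S'"
  shows "negative_swamp G Y P K r {g \<in> carrier G. f g \<in> S'}"
proof -
  have fixed: "f ` A \<subseteq> A" if "A \<subseteq> H" for A
    using that f_id by auto
  have "S' \<subseteq> (\<lambda>p. inv p) ` (P \<inter> H)"
    using S' m_inv_consistent[OF H] unfolding negative_swamp_def by auto
  then have "{g \<in> carrier G. f g \<in> S'} \<subseteq> (\<lambda>p. inv p) ` P"
    using f_neg by blast
  moreover have "r_disconnects_set G Y r {g \<in> carrier G. f g \<in> S'} P"
  proof -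
    obtain u v where uv: "u \<in> P \<inter> H" "v \<in> P \<inter> H"
      and disc: "r_disconnects (G\<lparr>carrier := H\<rparr>) Z r' S' {u} {v}"
      using S' unfolding negative_swamp_def r_disconnects_set_def by blast
    from r_disconnects_vimage[OF f disc fixed fixed] uv show ?thesis
      unfolding r_disconnects_set_def by blast
  qed
  moreover have "\<exists>g1 \<in> carrier G. \<exists>g2 \<in> carrier G.
    r_disconnects G Y r {g \<in> carrier G. f g \<in> S'} (g1 <# K) (g2 <# K)"
  proof -
    have l_coset_eq: "a <#\<^bsub>G\<lparr>carrier := H\<rparr>\<^esub> K = a <# K" for a
      unfolding l_coset_def by simp
    have l_coset_sub: "a <# K \<subseteq> H" if "a \<in> H" for a
      unfolding l_coset_def using that K subgroup.m_closed[OF H] by blast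
    obtain g1 g2 where g: "g1 \<in> H" "g2 \<in> H"
      and disc: "r_disconnects (G\<lparr>carrier := H\<rparr>) Z r' S' (g1 <# K) (g2 <# K)"
      using S' unfolding negative_swamp_def l_coset_eq by auto
    from r_disconnects_vimage[OF f disc fixed fixed] g l_coset_sub show ?thesis
      using subgroup.subset[OF H] by blast
  qed
  ultimately show ?thesis
    unfolding negative_swamp_def by blast
qed

lemma (in group) negative_swamp_if_finite_index:
  assumes Y: "sym_gen_set G Y" and H: "subgroup H G" and fin: "finite (rcosets H)"
    and P: "positive_cone G P" and K: "K \<subseteq> H"
    and swamps: "\<And>r'. r' > 0 \<Longrightarrow> \<exists>S'. negative_swamp (G\<lparr>carrier := H\<rparr>) Z (P \<inter> H) K r' S'"
  shows "\<exists>S. negative_swamp G Y P K r S"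
proof -
  obtain f where f: "f \<in> carrier G \<rightarrow> H" "\<And>h. h \<in> H \<Longrightarrow> f h = h"
      "\<And>g. g \<in> carrier G \<Longrightarrow> f g \<in> (\<lambda>p. inv p) ` P \<Longrightarrow> g \<in> (\<lambda>p. inv p) ` P"
      "finite ((\<lambda>g. inv (f g) \<otimes> g) ` carrier G)"
    using negative_retraction[OF P H fin] by blast
  obtain r' where "r' > 0" and steps: "maps_steps f G Y r (G\<lparr>carrier := H\<rparr>) Z r'"
    using maps_steps_if_finite_displacement[OF Y H f(1,4)] by blast
  then obtain S' where "negative_swamp (G\<lparr>carrier := H\<rparr>) Z (P \<inter> H) K r' S'"
    using swamps by blast
  then show ?thesis
    using negative_swamp_vimage[OF H K steps f(2,3)] by blast
qed

theorem lemma4p8: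
  fixes G :: "('a, 'b) monoid_scheme" and H :: "'a set" and \<H> :: "'a set set"
  assumes "group G" and "fin_gen G" and "left_orderable G"
    and "subgroup H G" and "finite (rcosets\<^bsub>G\<^esub> H)"
    and "\<forall>K\<in>\<H>. subgroup K (G\<lparr>carrier := H\<rparr>)"
    and "Hucha (G\<lparr>carrier := H\<rparr>) \<H>"
  shows "Hucha G \<H>"
proof -
  interpret group G by (rule assms(1))
  obtain Y where Y: "sym_gen_set G Y"
    using sym_gen_set_if_fin_gen[OF assms(2)] .
  obtain Z where Z: "\<And>Q K r. positive_cone (G\<lparr>carrier := H\<rparr>) Q \<Longrightarrow> K \<in> \<H> \<Longrightarrow> r > 0 \<Longrightarrow>
      \<exists>S. negative_swamp (G\<lparr>carrier := H\<rparr>) Z Q K r S"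
    using assms(7) unfolding Hucha_def by blast
  have "\<exists>S. negative_swamp G Y P K r S"
    if P: "positive_cone G P" and K: "K \<in> \<H>" for P K and r :: real
  proof (rule negative_swamp_if_finite_index[OF Y assms(4,5) P])
    show "K \<subseteq> H"
      using assms(6) K subgroup.subset by fastforce
    show "\<exists>S'. negative_swamp (G\<lparr>carrier := H\<rparr>) Z (P \<inter> H) K r' S'" if "r' > 0" for r'
      using Z[OF positive_cone_subgroup[OF P assms(4)] K that] .
  qed
  then show ?thesis
    unfolding Hucha_def using assms(1-3) Y by blast
qed

end
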